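(* Let $\alpha>0$ and let $X$ be an $\alpha$-normal smooth reflexive pre-ordered Banach space with a closed cone such that $X_+-X_+$ is dense in $X$. Then its dual $X'$, endowed with the dual cone, is a $\upsilon$-quasi-lattice. If, in addition, $X$ is approximately $1$-conormal, then $X'$ is a $\mu$-quasi-lattice, and its $\upsilon$- and $\mu$-quasi-suprema coincide.
   Context: A pre-ordered Banach space is a real Banach space $X$ with a cone $X_+$ ($X_++X_+\subseteq X_+$, $\lambda X_+\subseteq X_+$ for $\lambda\ge0$); $x\le y$ means $y-x\in X_+$. The dual cone is $X'_+=\{f\in X': f(X_+)\subseteq[0,\infty)\}$. $X$ is $\alpha$-normal if $0\le x\le y$ implies $\|x\|\le\alpha\|y\|$; approximately $1$-conormal if for every $x$ and $\varepsilon>0$ there is $a$ with $0\le a$, $x\le a$ and $\|a\|<\|x\|+\varepsilon$. $X$ is smooth if each norm-one $x$ has a unique norm-one $\phi\in X'$ with $\phi(x)=1$. For subsets $A$, $\upsilon(A)$ is the set of upper bounds and $\mu(A)$ the set of minimal upper bounds ($z\in\upsilon(A)$ with $A\le w\le z\Rightarrow w=z$). With $\sigma_{x,y}(z)=\|z-x\|+\|z-y\|$, a pre-ordered Banach space with closed cone is a $\upsilon$-quasi-lattice (resp. $\mu$-quasi-lattice) if for all $x,y$ the set $\upsilon(\{x,y\})$ (resp. $\mu(\{x,y\})$) is non-empty and contains a unique minimizer of $\sigma_{x,y}$ on it, the corresponding quasi-supremum. *)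

theory Defs
  imports "HOL-Analysis.Analysis"
begin

definition is_cone :: "'a::real_vector set \<Rightarrow> bool" where
  "is_cone K \<longleftrightarrow> (\<forall>x\<in>K. \<forall>y\<in>K. x + y \<in> K) \<and> (\<forall>x\<in>K. \<forall>c::real. c \<ge> 0 \<longrightarrow> c *\<^sub>R x \<in> K)"

definition cle :: "'a::real_vector set \<Rightarrow> 'a \<Rightarrow> 'a \<Rightarrow> bool" where
  "cle K x y \<longleftrightarrow> y - x \<in> K"

definition dual_cone :: "'a::real_normed_vector set \<Rightarrow> ('a \<Rightarrow>\<^sub>L real) set" where
  "dual_cone K = {f. \<forall>x\<in>K. 0 \<le> blinfun_apply f x}"

definition alpha_normal :: "real \<Rightarrow> 'a::real_normed_vector set \<Rightarrow> bool" where
  "alpha_normal \<alpha> K \<longleftrightarrow> (\<forall>x y. cle K 0 x \<and> cle K x y \<longrightarrow> norm x \<le> \<alpha> * norm y)"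

definition approx_1_conormal :: "'a::real_normed_vector set \<Rightarrow> bool" where
  "approx_1_conormal K \<longleftrightarrow>
     (\<forall>x. \<forall>\<epsilon>>0. \<exists>a. cle K 0 a \<and> cle K x a \<and> norm a < norm x + \<epsilon>)"

definition smooth_space :: "'a::real_normed_vector itself \<Rightarrow> bool" where
  "smooth_space _ \<longleftrightarrow>
     (\<forall>x::'a. norm x = 1 \<longrightarrow> (\<exists>!\<phi>::'a \<Rightarrow>\<^sub>L real. norm \<phi> = 1 \<and> blinfun_apply \<phi> x = 1))"

definition reflexive_space :: "'a::real_normed_vector itself \<Rightarrow> bool" where
  "reflexive_space _ \<longleftrightarrow>
     (\<forall>\<Phi>::('a \<Rightarrow>\<^sub>L real) \<Rightarrow>\<^sub>L real. \<exists>x::'a. \<forall>f. blinfun_apply \<Phi> f = blinfun_apply f x)"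

definition upper_bounds :: "'a::real_vector set \<Rightarrow> 'a set \<Rightarrow> 'a set" where
  "upper_bounds K A = {z. \<forall>a\<in>A. cle K a z}"

definition min_upper_bounds :: "'a::real_vector set \<Rightarrow> 'a set \<Rightarrow> 'a set" where
  "min_upper_bounds K A =
     {z \<in> upper_bounds K A. \<forall>w. (\<forall>a\<in>A. cle K a w) \<and> cle K w z \<longrightarrow> w = z}"

definition sigma :: "'a::real_normed_vector \<Rightarrow> 'a \<Rightarrow> 'a \<Rightarrow> real" where
  "sigma x y z = norm (z - x) + norm (z - y)"

definition quasi_lattice_wrt :: "'a::real_normed_vector set \<Rightarrow> ('a \<Rightarrow> 'a \<Rightarrow> 'a set) \<Rightarrow> bool" where
  "quasi_lattice_wrt K S \<longleftrightarrow> closed K \<and>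
     (\<forall>x y. S x y \<noteq> {} \<and> (\<exists>!z. z \<in> S x y \<and> (\<forall>w\<in>S x y. sigma x y z \<le> sigma x y w)))"

definition quasi_sup_wrt :: "('a::real_normed_vector \<Rightarrow> 'a \<Rightarrow> 'a set) \<Rightarrow> 'a \<Rightarrow> 'a \<Rightarrow> 'a" where
  "quasi_sup_wrt S x y = (THE z. z \<in> S x y \<and> (\<forall>w\<in>S x y. sigma x y z \<le> sigma x y w))"

definition upsilon_quasi_lattice :: "'a::real_normed_vector set \<Rightarrow> bool" where
  "upsilon_quasi_lattice K \<longleftrightarrow> quasi_lattice_wrt K (\<lambda>x y. upper_bounds K {x, y})"

definition mu_quasi_lattice :: "'a::real_normed_vector set \<Rightarrow> bool" where
  "mu_quasi_lattice K \<longleftrightarrow> quasi_lattice_wrt K (\<lambda>x y. min_upper_bounds K {x, y})"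

definition upsilon_quasi_sup :: "'a::real_normed_vector set \<Rightarrow> 'a \<Rightarrow> 'a \<Rightarrow> 'a" where
  "upsilon_quasi_sup K = quasi_sup_wrt (\<lambda>x y. upper_bounds K {x, y})"

definition mu_quasi_sup :: "'a::real_normed_vector set \<Rightarrow> 'a \<Rightarrow> 'a \<Rightarrow> 'a" where
  "mu_quasi_sup K = quasi_sup_wrt (\<lambda>x y. min_upper_bounds K {x, y})"

end

theory Submission
  imports Defs
begin

text \<open>Upper bounds of  {f, g}  in the dual cone exist because \<alpha>-normality lets every functional
  be dominated by a positive one (a Hahn--Banach argument). On the upper bounds, the sublevel
  sets of  sigma f g  are bounded and weak*-closed, so by Banach--Alaoglu  sigma f g  attains its
  minimum. The midpoint of two minimizers is again a minimizer, which forces equality in the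
  triangle inequality for their differences to  f  and to  g; in the dual of a smooth reflexive
  space this makes these differences parallel, and pointedness of the dual cone (from the density
  of  K - K) makes the minimizers equal. Under approximate 1-conormality the dual norm is monotone
  on the dual cone, so an upper bound below the minimizer is again a minimizer: the minimizer is a
  minimal upper bound, and the two quasi-suprema coincide.\<close>

section \<open>Sublinear functionals and the Hahn--Banach theorem\<close>

definition sublinear :: "('a::real_vector \<Rightarrow> real) \<Rightarrow> bool" where
  "sublinear p \<longleftrightarrow> (\<forall>x y. p (x + y) \<le> p x + p y) \<and> (\<forall>x c. c > 0 \<longrightarrow> p (c *\<^sub>R x) = c * p x)"

lemma sublinear_add: "sublinear p \<Longrightarrow> p (x + y) \<le> p x + p y"
  unfolding sublinear_def by blast

lemma sublinear_scaleR: "sublinear p \<Longrightarrow> c > 0 \<Longrightarrow> p (c *\<^sub>R x) = c * p x"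
  unfolding sublinear_def by blast

lemma sublinear_zero: "sublinear p \<Longrightarrow> p 0 = 0"
  using sublinear_scaleR[of p 2 0] by simp

lemma sublinear_scaleR_nonneg: "sublinear p \<Longrightarrow> c \<ge> 0 \<Longrightarrow> p (c *\<^sub>R x) = c * p x"
  by (cases "c = 0") (simp_all add: sublinear_zero sublinear_scaleR)

lemma sublinear_neg_le: "sublinear p \<Longrightarrow> - p (- x) \<le> p x"
  using sublinear_add[of p x "- x"] sublinear_zero[of p] by simp

lemma sublinearI:
  assumes "\<And>x y. p (x + y) \<le> p x + p y" and "\<And>c x. c > 0 \<Longrightarrow> p (c *\<^sub>R x) \<le> c * p x"
  shows "sublinear p"
proof -
  have "p (c *\<^sub>R x) = c * p x" if "c > 0" for c x
  proof -
    have "p x \<le> (1 / c) * p (c *\<^sub>R x)"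
      using assms(2)[of "1 / c" "c *\<^sub>R x"] that by simp
    then show ?thesis
      using assms(2)[OF that, of x] that by (simp add: field_simps)
  qed
  then show ?thesis using assms(1) unfolding sublinear_def by blast
qed

lemma sublinear_Inf_cone_image:
  fixes G :: "'a::real_vector \<Rightarrow> 'b::real_vector \<Rightarrow> real"
  assumes T: "T \<noteq> {}" "\<And>s t. s \<in> T \<Longrightarrow> t \<in> T \<Longrightarrow> s + t \<in> T"
      "\<And>c t. c > 0 \<Longrightarrow> t \<in> T \<Longrightarrow> c *\<^sub>R t \<in> T"
    and G_add: "\<And>x y s t. s \<in> T \<Longrightarrow> t \<in> T \<Longrightarrow> G (x + y) (s + t) \<le> G x s + G y t"
    and G_scaleR: "\<And>c x t. c > 0 \<Longrightarrow> t \<in> T \<Longrightarrow> G (c *\<^sub>R x) (c *\<^sub>R t) = c * G x t"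
    and bdd: "\<And>x. bdd_below (G x ` T)"
  shows "sublinear (\<lambda>x. Inf (G x ` T))"
proof -
  define Q where "Q x = Inf (G x ` T)" for x
  have lower: "Q x \<le> G x t" if "t \<in> T" for x t
    unfolding Q_def using that bdd by (simp add: cInf_lower)
  have greatest: "c \<le> Q x" if "\<And>t. t \<in> T \<Longrightarrow> c \<le> G x t" for c x
    unfolding Q_def using that T(1) by (auto intro: cInf_greatest)
  have "Q (x + y) \<le> Q x + Q y" for x y
  proof -
    have "Q (x + y) - Q y \<le> G x s" if s: "s \<in> T" for s
    proof -
      have "Q (x + y) - G x s \<le> G y t" if "t \<in> T" for t
        using lower[of "s + t" "x + y"] G_add[of s t x y] s that T(2) by auto
      then show ?thesis using greatest by fastforce
    qed
    then show ?thesis using greatest by fastforce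
  qed
  moreover have "Q (c *\<^sub>R x) \<le> c * Q x" if "c > 0" for c x
  proof -
    have "Q (c *\<^sub>R x) / c \<le> G x t" if "t \<in> T" for t
      using lower[of "c *\<^sub>R t" "c *\<^sub>R x"] G_scaleR[of c t x] T(3)[of c t] that \<open>c > 0\<close>
      by (simp add: divide_le_eq mult.commute)
    then have "Q (c *\<^sub>R x) / c \<le> Q x" by (rule greatest)
    then show ?thesis using \<open>c > 0\<close> by (simp add: divide_le_eq mult.commute)
  qed
  ultimately show ?thesis unfolding Q_def by (rule sublinearI)
qed

lemma sublinear_Inf_chain:
  fixes C :: "('a::real_vector \<Rightarrow> real) set"
  assumes "C \<noteq> {}" and sub: "\<And>q. q \<in> C \<Longrightarrow> sublinear q"
    and chain: "\<And>q r. q \<in> C \<Longrightarrow> r \<in> C \<Longrightarrow> (\<forall>x. q x \<le> r x) \<or> (\<forall>x. r x \<le> q x)"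
    and bdd: "\<And>x. bdd_below ((\<lambda>q. q x) ` C)"
  shows "sublinear (\<lambda>x. Inf ((\<lambda>q. q x) ` C))"
proof -
  define m where "m x = Inf ((\<lambda>q. q x) ` C)" for x
  have lower: "m x \<le> q x" if "q \<in> C" for q x
    unfolding m_def using that bdd by (simp add: cInf_lower)
  have greatest: "c \<le> m x" if "\<And>q. q \<in> C \<Longrightarrow> c \<le> q x" for c x
    unfolding m_def using that \<open>C \<noteq> {}\<close> by (auto intro: cInf_greatest)
  have "m (x + y) \<le> m x + m y" for x y
  proof -
    have "m (x + y) - m y \<le> q x" if q: "q \<in> C" for q
    proof -
      have "m (x + y) - q x \<le> r y" if r: "r \<in> C" for r
      proof -
        \<comment> \<open>use the smaller of the two comparable functions\<close>
        obtain s where "s \<in> C" "s x \<le> q x" "s y \<le> r y"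
          using chain[OF q r] q r by blast
        then show ?thesis
          using lower[of s "x + y"] sublinear_add[OF sub[OF \<open>s \<in> C\<close>], of x y] by linarith
      qed
      then show ?thesis using greatest by fastforce
    qed
    then show ?thesis using greatest by fastforce
  qed
  moreover have "m (c *\<^sub>R x) \<le> c * m x" if "c > 0" for c x
  proof -
    have "m (c *\<^sub>R x) / c \<le> q x" if "q \<in> C" for q
      using lower[OF that, of "c *\<^sub>R x"] sublinear_scaleR[OF sub[OF that] \<open>c > 0\<close>, of x] \<open>c > 0\<close>
      by (simp add: divide_le_eq mult.commute)
    then have "m (c *\<^sub>R x) / c \<le> m x" by (rule greatest)
    then show ?thesis using \<open>c > 0\<close> by (simp add: divide_le_eq mult.commute)
  qed
  ultimately show ?thesis unfolding m_def by (rule sublinearI)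
qed

lemma sublinear_minimal_imp_linear:
  fixes q :: "'a::real_vector \<Rightarrow> real"
  assumes q: "sublinear q" and minimal: "\<And>r. sublinear r \<Longrightarrow> (\<forall>x. r x \<le> q x) \<Longrightarrow> r = q"
  shows "linear q"
proof -
  have q_neg: "q (- y) = - q y" for y
  proof -
    \<comment> \<open>inf over  t \<ge> 0  of  q (x + t y) - t q y  is a sublinear minorant of  q, at most  -q y  at  -y\<close>
    define G where "G x t = q (x + t *\<^sub>R y) - t * q y" for x and t :: real
    have bdd: "bdd_below (G x ` {0..})" for x
    proof (rule bdd_belowI)
      fix z assume "z \<in> G x ` {0..}"
      then obtain t where t: "t \<ge> 0" "z = G x t" by auto
      have "q (t *\<^sub>R y) \<le> q (x + t *\<^sub>R y) + q (- x)"
        using sublinear_add[OF q, of "x + t *\<^sub>R y" "- x"] by simp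
      then show "- q (- x) \<le> z" using t sublinear_scaleR_nonneg[OF q] unfolding G_def by simp
    qed
    have lower: "Inf (G x ` {0..}) \<le> G x t" if "t \<ge> 0" for x t
      using bdd that by (auto intro: cInf_lower)
    have Inf_eq: "(\<lambda>x. Inf (G x ` {0..})) = q"
    proof (rule minimal)
      show "sublinear (\<lambda>x. Inf (G x ` {0..}))"
      proof (rule sublinear_Inf_cone_image)
        show "G (x + x') (s + t) \<le> G x s + G x' t" for x x' s t
          using sublinear_add[OF q, of "x + s *\<^sub>R y" "x' + t *\<^sub>R y"]
          unfolding G_def by (simp add: algebra_simps)
        show "G (c *\<^sub>R x) (c *\<^sub>R t) = c * G x t" if "c > 0" for c x t
          using sublinear_scaleR[OF q that, of "x + t *\<^sub>R y"]
          unfolding G_def by (simp add: algebra_simps)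
      qed (use bdd in auto)
      show "\<forall>x. Inf (G x ` {0..}) \<le> q x"
        using lower[of 0] unfolding G_def by simp
    qed
    have "q (- y) \<le> G (- y) 1"
      using lower[of 1 "- y"] unfolding Inf_eq[symmetric] by simp
    then have "q (- y) \<le> - q y" unfolding G_def using sublinear_zero[OF q] by simp
    then show ?thesis using sublinear_neg_le[OF q, of y] by linarith
  qed
  have q_add: "q (x + y) = q x + q y" for x y
    using sublinear_add[OF q, of "- x" "- y"] sublinear_add[OF q, of x y] q_neg[of "x + y"]
      q_neg[of x] q_neg[of y] by simp
  have q_scaleR: "q (c *\<^sub>R x) = c * q x" for c x
  proof (cases "c \<ge> 0")
    case True then show ?thesis by (rule sublinear_scaleR_nonneg[OF q])
  next
    case False
    then show ?thesis
      using sublinear_scaleR_nonneg[OF q, of "- c" x] q_neg[of "(- c) *\<^sub>R x"] by simp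
  qed
  show "linear q" by (rule linearI) (simp_all add: q_add q_scaleR)
qed

theorem hahn_banach_sublinear:
  fixes P :: "'a::real_vector \<Rightarrow> real"
  assumes "sublinear P"
  shows "\<exists>L. linear L \<and> (\<forall>x. L x \<le> P x)"
proof -
  define A where "A = {q. sublinear q \<and> (\<forall>x. q x \<le> P x)}"
  define R where "R q r \<longleftrightarrow> (\<forall>x. r x \<le> q x)" for q r :: "'a \<Rightarrow> real"
  have partial_order: "partial_order_on A (relation_of R A)"
    unfolding partial_order_on_def preorder_on_def refl_on_def trans_def antisym_def
      relation_of_def R_def
    by (auto intro: order_trans antisym simp: fun_eq_iff)
  have chain_bounded: "\<exists>u \<in> A. \<forall>q \<in> C. R q u" if C: "C \<in> Chains (relation_of R A)" for C
  proof (cases "C = {}")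
    case True then show ?thesis using assms unfolding A_def by auto
  next
    case False
    have CA: "C \<subseteq> A" using C False unfolding Chains_def relation_of_def by blast
    define m where "m x = Inf ((\<lambda>q. q x) ` C)" for x
    have bdd: "bdd_below ((\<lambda>q. q x) ` C)" for x
    proof (rule bdd_belowI)
      fix y assume "y \<in> (\<lambda>q. q x) ` C"
      then obtain q where "q \<in> C" "y = q x" by auto
      then have "sublinear q" "q (- x) \<le> P (- x)" using CA unfolding A_def by auto
      then show "- P (- x) \<le> y" using sublinear_neg_le[of q x] \<open>y = q x\<close> by linarith
    qed
    have "sublinear m"
      unfolding m_def
    proof (rule sublinear_Inf_chain[OF False])
      show "sublinear q" if "q \<in> C" for q using that CA unfolding A_def by auto
      show "(\<forall>x. q x \<le> r x) \<or> (\<forall>x. r x \<le> q x)" if "q \<in> C" "r \<in> C" for q r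
        using C that unfolding Chains_def relation_of_def R_def by blast
    qed (rule bdd)
    have lower: "m x \<le> q x" if "q \<in> C" for q x
      unfolding m_def using that bdd by (simp add: cInf_lower)
    obtain q0 where "q0 \<in> C" using False by blast
    then have "q0 x \<le> P x" for x using CA unfolding A_def by blast
    then have "m x \<le> P x" for x using lower[OF \<open>q0 \<in> C\<close>] order_trans by blast
    then have "m \<in> A" using \<open>sublinear m\<close> unfolding A_def by blast
    moreover have "\<forall>q\<in>C. R q m" using lower unfolding R_def by blast
    ultimately show ?thesis by blast
  qed
  obtain q where "q \<in> A" and q_max: "\<And>r. r \<in> A \<Longrightarrow> R q r \<Longrightarrow> r = q"
    using predicate_Zorn[OF partial_order chain_bounded] by blast
  then have q: "sublinear q" "\<And>x. q x \<le> P x" unfolding A_def by auto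
  have "linear q"
  proof (rule sublinear_minimal_imp_linear[OF q(1)])
    fix r assume r: "sublinear r" "\<forall>x. r x \<le> q x"
    then have "r x \<le> P x" for x using q(2)[of x] by (meson order_trans)
    then show "r = q" using q_max r unfolding A_def R_def by blast
  qed
  then show ?thesis using q(2) by blast
qed

corollary hahn_banach_blinfun:
  fixes P :: "'a::real_normed_vector \<Rightarrow> real"
  assumes "sublinear P" "C \<ge> 0" "\<And>x. P x \<le> C * norm x"
  shows "\<exists>\<phi>::'a \<Rightarrow>\<^sub>L real. (\<forall>x. blinfun_apply \<phi> x \<le> P x) \<and> norm \<phi> \<le> C"
proof -
  obtain L where L: "linear L" "\<And>x. L x \<le> P x"
    using hahn_banach_sublinear[OF assms(1)] by blast
  have L_abs: "\<bar>L x\<bar> \<le> C * norm x" for x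
    using L(2)[of x] L(2)[of "- x"] assms(3)[of x] assms(3)[of "- x"] linear_neg[OF L(1), of x]
    by auto
  then have "bounded_linear L"
    using L(1) by (intro bounded_linear_intro[where K = C]) (auto simp: linear_add linear_scale mult.commute)
  then have "blinfun_apply (Blinfun L) = L" by (rule bounded_linear_Blinfun_apply)
  moreover have "norm (Blinfun L) \<le> C"
    using L_abs assms(2) \<open>blinfun_apply (Blinfun L) = L\<close> by (intro norm_blinfun_bound) auto
  ultimately show ?thesis using L(2) by (intro exI[of _ "Blinfun L"]) simp
qed

section \<open>Norming functionals\<close>

lemma blinfun_le_norm:
  fixes \<phi> :: "'a::real_normed_vector \<Rightarrow>\<^sub>L real"
  assumes "norm x \<le> 1"
  shows "blinfun_apply \<phi> x \<le> norm \<phi>"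
proof -
  have "\<bar>blinfun_apply \<phi> x\<bar> \<le> norm \<phi> * norm x" using norm_blinfun[of \<phi> x] by simp
  also have "\<dots> \<le> norm \<phi>" using assms by (intro mult_left_le) auto
  finally show ?thesis by simp
qed

lemma norm_blinfun_le_iff:
  fixes \<phi> :: "'a::real_normed_vector \<Rightarrow>\<^sub>L real"
  shows "norm \<phi> \<le> b \<longleftrightarrow> (\<forall>x. norm x \<le> 1 \<longrightarrow> blinfun_apply \<phi> x \<le> b)"
proof
  assume "norm \<phi> \<le> b"
  then show "\<forall>x. norm x \<le> 1 \<longrightarrow> blinfun_apply \<phi> x \<le> b"
    using blinfun_le_norm order_trans by blast
next
  assume ball: "\<forall>x. norm x \<le> 1 \<longrightarrow> blinfun_apply \<phi> x \<le> b"
  have "\<bar>blinfun_apply \<phi> x\<bar> \<le> b * norm x" for x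
  proof (cases "x = 0")
    case False
    define u where "u = (1 / norm x) *\<^sub>R x"
    have "norm u \<le> 1" "norm (- u) \<le> 1" using False unfolding u_def by auto
    then have "\<bar>blinfun_apply \<phi> u\<bar> \<le> b"
      using ball[rule_format, of u] ball[rule_format, of "- u"]
      by (auto simp: blinfun.minus_right abs_le_iff)
    moreover have "blinfun_apply \<phi> x = norm x * blinfun_apply \<phi> u"
      using False unfolding u_def by (simp add: blinfun.scaleR_right)
    ultimately show ?thesis
      using mult_left_mono[of "\<bar>blinfun_apply \<phi> u\<bar>" b "norm x"] by (simp add: abs_mult mult.commute)
  qed simp
  moreover have "0 \<le> b" using ball[rule_format, of 0] by simp
  ultimately show "norm \<phi> \<le> b" by (intro norm_blinfun_bound) auto
qed

lemma exists_norming_functional: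
  fixes v :: "'a::real_normed_vector"
  shows "\<exists>\<phi>::'a \<Rightarrow>\<^sub>L real. norm \<phi> \<le> 1 \<and> blinfun_apply \<phi> v = norm v"
proof -
  define G where "G \<psi> t = norm (\<psi> - t *\<^sub>R v) + t * norm v" for \<psi> and t :: real
  have bdd: "bdd_below (G \<psi> ` UNIV)" for \<psi>
  proof (rule bdd_belowI)
    fix z assume "z \<in> G \<psi> ` UNIV"
    then obtain t where t: "z = G \<psi> t" by auto
    have "\<bar>t\<bar> * norm v \<le> norm (\<psi> - t *\<^sub>R v) + norm \<psi>"
      using norm_triangle_ineq4[of \<psi> "\<psi> - t *\<^sub>R v"] by simp
    moreover have "0 \<le> (\<bar>t\<bar> + t) * norm v" by simp
    ultimately show "- norm \<psi> \<le> z" unfolding t G_def by (simp add: distrib_right)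
  qed
  have lower: "Inf (G \<psi> ` UNIV) \<le> G \<psi> t" for \<psi> t
    using bdd by (auto intro: cInf_lower)
  have "sublinear (\<lambda>\<psi>. Inf (G \<psi> ` UNIV))"
  proof (rule sublinear_Inf_cone_image)
    show "G (x + y) (s + t) \<le> G x s + G y t" for x y s t
      using norm_triangle_ineq[of "x - s *\<^sub>R v" "y - t *\<^sub>R v"]
      unfolding G_def by (simp add: algebra_simps)
    show "G (c *\<^sub>R x) (c *\<^sub>R t) = c * G x t" if "c > 0" for c x t
    proof -
      have "c *\<^sub>R x - (c * t) *\<^sub>R v = c *\<^sub>R (x - t *\<^sub>R v)" by (simp add: algebra_simps)
      then have "norm (c *\<^sub>R x - (c * t) *\<^sub>R v) = c * norm (x - t *\<^sub>R v)"
        using that by simp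
      then show ?thesis unfolding G_def by (simp add: algebra_simps)
    qed
  qed (use bdd in auto)
  moreover have "Inf (G \<psi> ` UNIV) \<le> 1 * norm \<psi>" for \<psi>
    using lower[of \<psi> 0] unfolding G_def by simp
  ultimately obtain \<phi> :: "'a \<Rightarrow>\<^sub>L real"
    where \<phi>: "\<And>\<psi>. blinfun_apply \<phi> \<psi> \<le> Inf (G \<psi> ` UNIV)" "norm \<phi> \<le> 1"
    using hahn_banach_blinfun[of _ 1] by fastforce
  have "blinfun_apply \<phi> v \<le> norm v"
    using \<phi>(1)[of v] lower[of v 1] unfolding G_def by simp
  moreover have "- blinfun_apply \<phi> v \<le> - norm v"
    using \<phi>(1)[of "- v"] lower[of "- v" "- 1"] unfolding G_def by (simp add: blinfun.minus_right)
  ultimately show ?thesis using \<phi>(2) by (intro exI[of _ \<phi>]) simp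
qed

lemma reflexive_norm_attained:
  fixes \<phi> :: "'a::real_normed_vector \<Rightarrow>\<^sub>L real"
  assumes "reflexive_space TYPE('a)"
  shows "\<exists>x. norm x \<le> 1 \<and> blinfun_apply \<phi> x = norm \<phi>"
proof -
  obtain \<Phi> :: "('a \<Rightarrow>\<^sub>L real) \<Rightarrow>\<^sub>L real" where \<Phi>: "norm \<Phi> \<le> 1" "blinfun_apply \<Phi> \<phi> = norm \<phi>"
    using exists_norming_functional by blast
  obtain x where x: "\<And>f. blinfun_apply \<Phi> f = blinfun_apply f x"
    using assms unfolding reflexive_space_def by blast
  obtain f :: "'a \<Rightarrow>\<^sub>L real" where f: "norm f \<le> 1" "blinfun_apply f x = norm x"
    using exists_norming_functional by blast
  have "norm x \<le> norm \<Phi>"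
    using blinfun_le_norm[OF f(1), of \<Phi>] x f(2) by simp
  then have "norm x \<le> 1" using \<Phi>(1) by linarith
  then show ?thesis using \<Phi>(2) x[of \<phi>] by (intro exI[of _ x]) simp
qed

text \<open>A norming point of  a + b  norms both  a  and  b, so by smoothness  a / \<parallel>a\<parallel>  and
  b / \<parallel>b\<parallel>  are the same support functional at that point.\<close>

lemma dual_norm_add_eq_imp_parallel:
  fixes a b :: "'a::real_normed_vector \<Rightarrow>\<^sub>L real"
  assumes "reflexive_space TYPE('a)" and smooth: "smooth_space TYPE('a)"
    and "norm (a + b) = norm a + norm b"
  shows "norm a *\<^sub>R b = norm b *\<^sub>R a"
proof (cases "a = 0 \<or> b = 0")
  case False
  then have "norm a > 0" "norm b > 0" by auto
  obtain x where x: "norm x \<le> 1" "blinfun_apply (a + b) x = norm (a + b)"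
    using reflexive_norm_attained[OF assms(1)] by blast
  have "blinfun_apply a x + blinfun_apply b x = norm a + norm b"
    using x(2) assms(3) by (simp add: plus_blinfun.rep_eq)
  then have ax: "blinfun_apply a x = norm a" and bx: "blinfun_apply b x = norm b"
    using blinfun_le_norm[OF x(1), of a] blinfun_le_norm[OF x(1), of b] by linarith+
  define u w where "u = (1 / norm a) *\<^sub>R a" and "w = (1 / norm b) *\<^sub>R b"
  have u: "norm u = 1" "blinfun_apply u x = 1" and w: "norm w = 1" "blinfun_apply w x = 1"
    using \<open>norm a > 0\<close> \<open>norm b > 0\<close> ax bx unfolding u_def w_def by (auto simp: scaleR_blinfun.rep_eq)
  have "norm x = 1"
    using x(1) norm_blinfun[of u x] u by simp
  then have "u = w" using smooth u w unfolding smooth_space_def by blast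
  then have "(norm a * norm b) *\<^sub>R u = (norm a * norm b) *\<^sub>R w" by simp
  then show ?thesis
    using \<open>norm a > 0\<close> \<open>norm b > 0\<close> unfolding u_def w_def by (simp add: field_simps)
qed auto

section \<open>The dual cone\<close>

lemma dual_cone_add: "f \<in> dual_cone K \<Longrightarrow> g \<in> dual_cone K \<Longrightarrow> f + g \<in> dual_cone K"
  unfolding dual_cone_def by (simp add: plus_blinfun.rep_eq)

lemma dual_cone_scaleR: "c \<ge> 0 \<Longrightarrow> f \<in> dual_cone K \<Longrightarrow> c *\<^sub>R f \<in> dual_cone K"
  unfolding dual_cone_def by (simp add: scaleR_blinfun.rep_eq)

lemma closed_dual_cone: "closed (dual_cone K)"
proof -
  have "dual_cone K = (\<Inter>x\<in>K. {f. 0 \<le> blinfun_apply f x})"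
    unfolding dual_cone_def by auto
  moreover have "closed {f::'a::real_normed_vector \<Rightarrow>\<^sub>L real. 0 \<le> blinfun_apply f x}" for x
    by (intro closed_Collect_le continuous_intros)
  ultimately show ?thesis by auto
qed

lemma dual_cone_pointed:
  fixes K :: "'a::real_normed_vector set"
  assumes dense: "closure {x - y | x y. x \<in> K \<and> y \<in> K} = UNIV"
    and "\<phi> \<in> dual_cone K" "- \<phi> \<in> dual_cone K"
  shows "\<phi> = 0"
proof -
  have "blinfun_apply \<phi> k = 0" if "k \<in> K" for k
    using assms(2,3) that unfolding dual_cone_def by (force simp: uminus_blinfun.rep_eq)
  then have "{x - y | x y. x \<in> K \<and> y \<in> K} \<subseteq> {x. blinfun_apply \<phi> x = 0}"
    by (auto simp: blinfun.diff_right)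
  moreover have "closed {x. blinfun_apply \<phi> x = 0}"
    by (intro closed_Collect_eq continuous_intros)
  ultimately have "closure {x - y | x y. x \<in> K \<and> y \<in> K} \<subseteq> {x. blinfun_apply \<phi> x = 0}"
    by (rule closure_minimal)
  then show ?thesis using dense by (auto intro!: blinfun_eqI)
qed

lemma mem_upper_bounds_pair_iff: "h \<in> upper_bounds C {f, g} \<longleftrightarrow> h - f \<in> C \<and> h - g \<in> C"
  unfolding upper_bounds_def cle_def by auto

text \<open>The functional  x \<mapsto> inf {\<alpha> \<parallel>f\<parallel> \<parallel>x + k1 + k2\<parallel> - f k1 | k1 k2 \<in> K}  is sublinear, and
  \<alpha>-normality ( f k1 \<le> \<alpha> \<parallel>f\<parallel> \<parallel>k1 + k2\<parallel> ) keeps it finite; testing a linear minorant at  -k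
  with  (k1, k2) = (k, 0)  and  (0, k)  shows that it is positive and dominates  f.\<close>

lemma exists_dual_cone_dominating:
  fixes K :: "'a::real_normed_vector set" and f :: "'a \<Rightarrow>\<^sub>L real"
  assumes cone: "is_cone K" and "K \<noteq> {}" and normal: "alpha_normal \<alpha> K" and "\<alpha> > 0"
  shows "\<exists>p. p \<in> dual_cone K \<and> p - f \<in> dual_cone K"
proof -
  define C where "C = \<alpha> * norm f"
  have "C \<ge> 0" unfolding C_def using \<open>\<alpha> > 0\<close> by simp
  define T where "T = K \<times> K"
  define G where "G x t = C * norm (x + fst t + snd t) - blinfun_apply f (fst t)"
    for x and t :: "'a \<times> 'a"
  have K_add: "a + b \<in> K" if "a \<in> K" "b \<in> K" for a b
    using cone that unfolding is_cone_def by blast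
  have K_scaleR: "c *\<^sub>R a \<in> K" if "a \<in> K" "c \<ge> 0" for a c
    using cone that unfolding is_cone_def by blast
  have "0 \<in> K" using K_scaleR[of _ 0] \<open>K \<noteq> {}\<close> by force
  have bdd: "bdd_below (G x ` T)" for x
  proof (rule bdd_belowI)
    fix z assume "z \<in> G x ` T"
    then obtain k1 k2 where k: "k1 \<in> K" "k2 \<in> K" "z = G x (k1, k2)" unfolding T_def by auto
    have "norm k1 \<le> \<alpha> * norm (k1 + k2)"
      using normal k unfolding alpha_normal_def cle_def by (metis add_diff_cancel_left' diff_zero)
    then have "blinfun_apply f k1 \<le> C * norm (k1 + k2)"
      using norm_blinfun[of f k1] \<open>\<alpha> > 0\<close> unfolding C_def
      by (smt (verit, best) mult.assoc mult.left_commute mult_left_mono norm_ge_zero real_norm_def)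
    moreover have "C * (norm (k1 + k2) - norm x) \<le> C * norm (x + k1 + k2)"
      using norm_triangle_ineq4[of "x + k1 + k2" x] \<open>C \<ge> 0\<close>
      by (intro mult_left_mono) (simp_all add: algebra_simps)
    ultimately show "- (C * norm x) \<le> z" unfolding k G_def by (simp add: algebra_simps)
  qed
  have lower: "Inf (G x ` T) \<le> G x t" if "t \<in> T" for x t
    using bdd that by (auto intro: cInf_lower)
  have "sublinear (\<lambda>x. Inf (G x ` T))"
  proof (rule sublinear_Inf_cone_image)
    show "T \<noteq> {}" unfolding T_def using \<open>0 \<in> K\<close> by blast
    show "s + t \<in> T" if "s \<in> T" "t \<in> T" for s t
      using that K_add unfolding T_def by (auto simp: plus_prod_def)
    show "c *\<^sub>R t \<in> T" if "c > 0" "t \<in> T" for c t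
      using that K_scaleR unfolding T_def by (auto simp: scaleR_prod_def)
    show "G (x + y) (s + t) \<le> G x s + G y t" for x y s t
    proof -
      have "norm (x + y + fst (s + t) + snd (s + t))
          \<le> norm (x + fst s + snd s) + norm (y + fst t + snd t)"
        using norm_triangle_ineq[of "x + fst s + snd s" "y + fst t + snd t"]
        by (simp add: algebra_simps)
      then have "C * norm (x + y + fst (s + t) + snd (s + t))
          \<le> C * norm (x + fst s + snd s) + C * norm (y + fst t + snd t)"
        using \<open>C \<ge> 0\<close> by (metis distrib_left mult_left_mono)
      then show ?thesis unfolding G_def by (simp add: blinfun.add_right)
    qed
    show "G (c *\<^sub>R x) (c *\<^sub>R t) = c * G x t" if "c > 0" for c x t
    proof -
      have "c *\<^sub>R x + fst (c *\<^sub>R t) + snd (c *\<^sub>R t) = c *\<^sub>R (x + fst t + snd t)"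
        by (simp add: algebra_simps)
      then have "norm (c *\<^sub>R x + fst (c *\<^sub>R t) + snd (c *\<^sub>R t)) = c * norm (x + fst t + snd t)"
        using that by simp
      then show ?thesis unfolding G_def by (simp add: blinfun.scaleR_right right_diff_distrib)
    qed
  qed (use bdd in auto)
  moreover have "Inf (G x ` T) \<le> C * norm x" for x
    using lower[of "(0, 0)" x] \<open>0 \<in> K\<close> unfolding T_def G_def by simp
  ultimately obtain p :: "'a \<Rightarrow>\<^sub>L real" where p: "\<And>x. blinfun_apply p x \<le> Inf (G x ` T)"
    using hahn_banach_blinfun \<open>C \<ge> 0\<close> by blast
  have "blinfun_apply f k \<le> blinfun_apply p k \<and> 0 \<le> blinfun_apply p k" if "k \<in> K" for k
    using p[of "- k"] lower[of "(k, 0)" "- k"] lower[of "(0, k)" "- k"] that \<open>0 \<in> K\<close>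
    unfolding T_def G_def by (auto simp: blinfun.minus_right)
  then have "p \<in> dual_cone K \<and> p - f \<in> dual_cone K"
    unfolding dual_cone_def by (auto simp: minus_blinfun.rep_eq)
  then show ?thesis by blast
qed

lemma upper_bounds_dual_cone_nonempty:
  fixes K :: "'a::real_normed_vector set"
  assumes "is_cone K" "K \<noteq> {}" "alpha_normal \<alpha> K" "\<alpha> > 0"
  shows "upper_bounds (dual_cone K) {f, g} \<noteq> {}"
proof -
  obtain p where "p \<in> dual_cone K" "p - f \<in> dual_cone K"
    using exists_dual_cone_dominating[OF assms] by blast
  moreover obtain q where "q \<in> dual_cone K" "q - g \<in> dual_cone K"
    using exists_dual_cone_dominating[OF assms] by blast
  ultimately have "(p - f) + q \<in> dual_cone K" "(q - g) + p \<in> dual_cone K"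
    by (auto intro: dual_cone_add)
  then have "p + q \<in> upper_bounds (dual_cone K) {f, g}"
    unfolding mem_upper_bounds_pair_iff by (simp add: algebra_simps)
  then show ?thesis by blast
qed

lemma dual_cone_norm_mono:
  fixes K :: "'a::real_normed_vector set"
  assumes conormal: "approx_1_conormal K"
    and "\<phi> \<in> dual_cone K" "\<psi> - \<phi> \<in> dual_cone K"
  shows "norm \<phi> \<le> norm \<psi>"
  unfolding norm_blinfun_le_iff
proof (intro allI impI)
  fix x :: 'a assume x: "norm x \<le> 1"
  show "blinfun_apply \<phi> x \<le> norm \<psi>"
  proof (rule field_le_epsilon)
    fix e :: real assume "e > 0"
    define \<epsilon> where "\<epsilon> = e / (norm \<psi> + 1)"
    have "\<epsilon> > 0"
      unfolding \<epsilon>_def using \<open>e > 0\<close> norm_ge_zero[of \<psi>] by (intro divide_pos_pos) linarith+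
    then obtain a where a: "a - 0 \<in> K" "a - x \<in> K" "norm a < norm x + \<epsilon>"
      using conormal unfolding approx_1_conormal_def cle_def by blast
    have "blinfun_apply \<phi> x \<le> blinfun_apply \<phi> a"
      using assms(2) a(2) unfolding dual_cone_def by (auto simp: blinfun.diff_right)
    also have "\<dots> \<le> blinfun_apply \<psi> a"
      using assms(3) a(1) unfolding dual_cone_def by (auto simp: minus_blinfun.rep_eq)
    also have "\<dots> \<le> norm \<psi> * norm a" using norm_blinfun[of \<psi> a] by simp
    also have "\<dots> \<le> norm \<psi> * (1 + \<epsilon>)" using a(3) x by (intro mult_left_mono) auto
    also have "\<dots> \<le> norm \<psi> + e"
    proof -
      have "norm \<psi> * \<epsilon> = e * (norm \<psi> / (norm \<psi> + 1))" unfolding \<epsilon>_def by simp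
      also have "\<dots> \<le> e"
      proof (intro mult_left_le)
        have "0 < norm \<psi> + 1" using norm_ge_zero[of \<psi>] by linarith
        then show "norm \<psi> / (norm \<psi> + 1) \<le> 1" by (simp add: pos_divide_le_eq)
      qed (use \<open>e > 0\<close> in auto)
      finally show ?thesis by (simp add: algebra_simps)
    qed
    finally show "blinfun_apply \<phi> x \<le> norm \<psi> + e" .
  qed
qed

section \<open>Weak* compactness\<close>

lemma closedin_all_le:
  assumes "\<And>i. i \<in> I \<Longrightarrow> continuous_map X euclideanreal (u i)"
    and "\<And>i. i \<in> I \<Longrightarrow> continuous_map X euclideanreal (v i)"
  shows "closedin X {p \<in> topspace X. \<forall>i\<in>I. u i p \<le> v i p}"
proof (cases "I = {}")
  case False
  have "closedin X {p \<in> topspace X. u i p \<le> v i p}" if "i \<in> I" for i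
    using closedin_continuous_map_preimage[OF continuous_map_diff[OF assms[OF that]], of "{..0}"]
    by simp
  moreover have "{p \<in> topspace X. \<forall>i\<in>I. u i p \<le> v i p} = (\<Inter>i\<in>I. {p \<in> topspace X. u i p \<le> v i p})"
    using False by auto
  ultimately show ?thesis using False by (auto intro!: closedin_Inter)
qed simp

lemma closedin_all_eq:
  assumes "\<And>i. i \<in> I \<Longrightarrow> continuous_map X euclideanreal (u i)"
    and "\<And>i. i \<in> I \<Longrightarrow> continuous_map X euclideanreal (v i)"
  shows "closedin X {p \<in> topspace X. \<forall>i\<in>I. u i p = v i p}"
proof -
  have eq: "{p \<in> topspace X. \<forall>i\<in>I. u i p = v i p}
      = {p \<in> topspace X. \<forall>i\<in>I. u i p \<le> v i p} \<inter> {p \<in> topspace X. \<forall>i\<in>I. v i p \<le> u i p}"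
    by (auto intro: antisym)
  show ?thesis unfolding eq by (intro closedin_Int closedin_all_le assms)
qed

definition pointwise_ball_topology :: "real \<Rightarrow> ('a::real_normed_vector \<Rightarrow> real) topology" where
  "pointwise_ball_topology R =
     product_topology (\<lambda>x. subtopology euclideanreal {- (R * norm x)..R * norm x}) UNIV"

lemma topspace_pointwise_ball_topology:
  "topspace (pointwise_ball_topology R) = {F. \<forall>x. \<bar>F x\<bar> \<le> R * norm x}"
proof -
  have "\<bar>F x\<bar> \<le> R * norm x \<longleftrightarrow> F x \<in> {- (R * norm x)..R * norm x}" for F :: "'a \<Rightarrow> real" and x
    by (auto simp: abs_le_iff)
  then show ?thesis unfolding pointwise_ball_topology_def by (auto simp: PiE_def Pi_def)
qed

lemma compact_space_pointwise_ball_topology: "compact_space (pointwise_ball_topology R)"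
  unfolding pointwise_ball_topology_def compact_space_product_topology
  by (auto intro!: compact_space_subtopology)

lemma continuous_map_pointwise_ball_eval:
  "continuous_map (pointwise_ball_topology R) euclideanreal (\<lambda>F. F x)"
proof -
  have "continuous_map (pointwise_ball_topology R)
      (subtopology euclideanreal {- (R * norm x)..R * norm x}) (\<lambda>F. F x)"
    unfolding pointwise_ball_topology_def by (rule continuous_map_product_projection) simp
  then show ?thesis by (simp add: continuous_map_in_subtopology)
qed

text \<open>Banach--Alaoglu: via  \<phi> \<mapsto> blinfun_apply \<phi>, the functionals of norm at most  R
  are exactly the linear points of the compact space  pointwise_ball_topology R, and
  linearity is a closed condition.\<close>

lemma closedin_blinfun_apply_image:
  assumes "R \<ge> 0"
    and closed: "closedin (pointwise_ball_topology R) {F \<in> topspace (pointwise_ball_topology R). P F}"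
  shows "closedin (pointwise_ball_topology R)
           (blinfun_apply ` {\<phi>::'a::real_normed_vector \<Rightarrow>\<^sub>L real. norm \<phi> \<le> R \<and> P (blinfun_apply \<phi>)})"
proof -
  let ?T = "pointwise_ball_topology R :: ('a \<Rightarrow> real) topology"
  define A where "A = {F \<in> topspace ?T. \<forall>i\<in>UNIV. F (fst i + snd i) = F (fst i) + F (snd i)}"
  define S where "S = {F \<in> topspace ?T. \<forall>i\<in>UNIV. F (fst i *\<^sub>R snd i) = fst i * F (snd i)}"
  have "blinfun_apply ` {\<phi>. norm \<phi> \<le> R \<and> P (blinfun_apply \<phi>)}
      = A \<inter> S \<inter> {F \<in> topspace ?T. P F}"
  proof (intro equalityI subsetI)
    fix F assume "F \<in> blinfun_apply ` {\<phi>. norm \<phi> \<le> R \<and> P (blinfun_apply \<phi>)}"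
    then obtain \<phi> where \<phi>: "norm \<phi> \<le> R" "P (blinfun_apply \<phi>)" "F = blinfun_apply \<phi>" by auto
    have "\<bar>F x\<bar> \<le> R * norm x" for x
      using norm_blinfun[of \<phi> x] mult_right_mono[OF \<phi>(1) norm_ge_zero[of x]] \<phi>(3) by simp
    then show "F \<in> A \<inter> S \<inter> {F \<in> topspace ?T. P F}"
      unfolding A_def S_def topspace_pointwise_ball_topology using \<phi>
      by (simp add: blinfun.add_right blinfun.scaleR_right)
  next
    fix F assume F: "F \<in> A \<inter> S \<inter> {F \<in> topspace ?T. P F}"
    then have "bounded_linear F"
      unfolding A_def S_def topspace_pointwise_ball_topology
      by (intro bounded_linear_intro[where K = R]) (auto simp: mult.commute)
    then have "blinfun_apply (Blinfun F) = F" by (rule bounded_linear_Blinfun_apply)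
    moreover have "norm (Blinfun F) \<le> R"
      using F \<open>R \<ge> 0\<close> \<open>blinfun_apply (Blinfun F) = F\<close>
      unfolding topspace_pointwise_ball_topology by (intro norm_blinfun_bound) auto
    ultimately show "F \<in> blinfun_apply ` {\<phi>. norm \<phi> \<le> R \<and> P (blinfun_apply \<phi>)}"
      using F by (intro image_eqI[of _ _ "Blinfun F"]) auto
  qed
  moreover have "closedin ?T A" "closedin ?T S"
    unfolding A_def S_def
    by (intro closedin_all_eq continuous_map_add continuous_map_real_mult_left
        continuous_map_pointwise_ball_eval)+
  ultimately show ?thesis using closed by (simp add: closedin_Int)
qed

lemma blinfun_decreasing_Inter_nonempty:
  fixes P :: "nat \<Rightarrow> ('a::real_normed_vector \<Rightarrow> real) \<Rightarrow> bool"
  assumes "R \<ge> 0"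
    and closed: "\<And>n. closedin (pointwise_ball_topology R) {F \<in> topspace (pointwise_ball_topology R). P n F}"
    and nonempty: "\<And>n. \<exists>\<phi>::'a \<Rightarrow>\<^sub>L real. norm \<phi> \<le> R \<and> P n (blinfun_apply \<phi>)"
    and decreasing: "\<And>n F. P (Suc n) F \<Longrightarrow> P n F"
  shows "\<exists>\<phi>::'a \<Rightarrow>\<^sub>L real. norm \<phi> \<le> R \<and> (\<forall>n. P n (blinfun_apply \<phi>))"
proof -
  define D where "D n = blinfun_apply ` {\<phi>::'a \<Rightarrow>\<^sub>L real. norm \<phi> \<le> R \<and> P n (blinfun_apply \<phi>)}" for n
  have "(\<Inter>n. D n) \<noteq> {}"
  proof (rule compact_space_imp_nest[OF compact_space_pointwise_ball_topology])
    show "closedin (pointwise_ball_topology R) (D n)" for n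
      unfolding D_def using \<open>R \<ge> 0\<close> closed by (rule closedin_blinfun_apply_image)
    show "D n \<noteq> {}" for n unfolding D_def using nonempty by blast
    show "decseq D" unfolding D_def by (rule decseq_SucI) (auto intro: decreasing)
  qed
  then obtain F where F: "\<And>n. F \<in> D n" by blast
  then obtain \<phi> where \<phi>: "norm \<phi> \<le> R" "F = blinfun_apply \<phi>" unfolding D_def by blast
  have "P n F" for n using F[of n] unfolding D_def by auto
  then show ?thesis using \<phi> by blast
qed

section \<open>Existence of the quasi-supremum\<close>

lemma norm_add_norm_blinfun_le_iff:
  fixes a b :: "'a::real_normed_vector \<Rightarrow>\<^sub>L real"
  shows "norm a + norm b \<le> c \<longleftrightarrow>
    (\<forall>x y. norm x \<le> 1 \<longrightarrow> norm y \<le> 1 \<longrightarrow> blinfun_apply a x + blinfun_apply b y \<le> c)"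
proof
  assume "norm a + norm b \<le> c"
  then show "\<forall>x y. norm x \<le> 1 \<longrightarrow> norm y \<le> 1 \<longrightarrow> blinfun_apply a x + blinfun_apply b y \<le> c"
    by (meson add_mono blinfun_le_norm order_trans)
next
  assume ball: "\<forall>x y. norm x \<le> 1 \<longrightarrow> norm y \<le> 1 \<longrightarrow> blinfun_apply a x + blinfun_apply b y \<le> c"
  have a_le: "norm a \<le> c - blinfun_apply b y" if "norm y \<le> 1" for y
    unfolding norm_blinfun_le_iff using ball that by (simp add: le_diff_eq)
  have "norm b \<le> c - norm a"
    unfolding norm_blinfun_le_iff[of b]
  proof (intro allI impI)
    fix y :: 'a assume "norm y \<le> 1"
    then show "blinfun_apply b y \<le> c - norm a" using a_le by fastforce
  qed
  then show "norm a + norm b \<le> c" by simp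
qed

definition sigma_sublevel_pointwise ::
    "'a::real_normed_vector set \<Rightarrow> ('a \<Rightarrow>\<^sub>L real) \<Rightarrow> ('a \<Rightarrow>\<^sub>L real) \<Rightarrow> real \<Rightarrow> ('a \<Rightarrow> real) \<Rightarrow> bool"
  where "sigma_sublevel_pointwise K f g c F \<longleftrightarrow>
    (\<forall>k\<in>K. blinfun_apply f k \<le> F k \<and> blinfun_apply g k \<le> F k) \<and>
    (\<forall>x y. norm x \<le> 1 \<longrightarrow> norm y \<le> 1 \<longrightarrow> F x - blinfun_apply f x + (F y - blinfun_apply g y) \<le> c)"

lemma sigma_sublevel_pointwise_blinfun_iff:
  "sigma_sublevel_pointwise K f g c (blinfun_apply h) \<longleftrightarrow>
    h \<in> upper_bounds (dual_cone K) {f, g} \<and> sigma f g h \<le> c"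
  unfolding sigma_sublevel_pointwise_def mem_upper_bounds_pair_iff sigma_def
    norm_add_norm_blinfun_le_iff dual_cone_def
  by (auto simp: minus_blinfun.rep_eq)

lemma sigma_sublevel_pointwise_mono:
  "sigma_sublevel_pointwise K f g c F \<Longrightarrow> c \<le> c' \<Longrightarrow> sigma_sublevel_pointwise K f g c' F"
  unfolding sigma_sublevel_pointwise_def by (meson order_trans)

lemma closedin_sigma_sublevel_pointwise:
  "closedin (pointwise_ball_topology R)
    {F \<in> topspace (pointwise_ball_topology R). sigma_sublevel_pointwise K f g c F}"
proof -
  let ?T = "pointwise_ball_topology R"
  have const: "continuous_map ?T euclideanreal (\<lambda>F. r)" for r :: real by simp
  have "{F \<in> topspace ?T. sigma_sublevel_pointwise K f g c F} =
      {F \<in> topspace ?T. \<forall>k\<in>K. blinfun_apply f k \<le> F k} \<inter>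
      {F \<in> topspace ?T. \<forall>k\<in>K. blinfun_apply g k \<le> F k} \<inter>
      {F \<in> topspace ?T. \<forall>xy\<in>{x. norm x \<le> 1} \<times> {y. norm y \<le> 1}.
         F (fst xy) - blinfun_apply f (fst xy) + (F (snd xy) - blinfun_apply g (snd xy)) \<le> c}"
    unfolding sigma_sublevel_pointwise_def by auto
  moreover have "closedin ?T {F \<in> topspace ?T. \<forall>k\<in>K. blinfun_apply f k \<le> F k}"
      "closedin ?T {F \<in> topspace ?T. \<forall>k\<in>K. blinfun_apply g k \<le> F k}"
      "closedin ?T {F \<in> topspace ?T. \<forall>xy\<in>{x. norm x \<le> 1} \<times> {y. norm y \<le> 1}.
         F (fst xy) - blinfun_apply f (fst xy) + (F (snd xy) - blinfun_apply g (snd xy)) \<le> c}"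
    by (intro closedin_all_le const continuous_map_pointwise_ball_eval
        continuous_map_add continuous_map_diff)+
  ultimately show ?thesis by (simp add: closedin_Int)
qed

lemma exists_sigma_minimizer_upper_bounds:
  fixes K :: "'a::real_normed_vector set" and f g :: "'a \<Rightarrow>\<^sub>L real"
  defines "U \<equiv> upper_bounds (dual_cone K) {f, g}"
  assumes "U \<noteq> {}"
  shows "\<exists>h\<in>U. \<forall>w\<in>U. sigma f g h \<le> sigma f g w"
proof -
  define m where "m = Inf (sigma f g ` U)"
  have "bdd_below (sigma f g ` U)" by (rule bdd_belowI[of _ 0]) (auto simp: sigma_def)
  then have m_le: "m \<le> sigma f g w" if "w \<in> U" for w
    unfolding m_def using that by (auto intro: cInf_lower)
  have "m \<ge> 0" unfolding m_def using \<open>U \<noteq> {}\<close> by (auto simp: sigma_def intro: cInf_greatest)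
  define c where "c n = m + 1 / real (Suc n)" for n
  have c_le: "c n \<le> m + 1" for n unfolding c_def by (simp add: divide_le_eq)
  define P where "P n = sigma_sublevel_pointwise K f g (c n)" for n
  have P_iff: "P n (blinfun_apply h) \<longleftrightarrow> h \<in> U \<and> sigma f g h \<le> c n" for n h
    unfolding P_def U_def by (rule sigma_sublevel_pointwise_blinfun_iff)
  define R where "R = m + 1 + norm f"
  have norm_le: "norm h \<le> R" if "sigma f g h \<le> c n" for h n
  proof -
    have "norm h \<le> norm (h - f) + norm f" using norm_triangle_ineq2[of h f] by simp
    also have "\<dots> \<le> sigma f g h + norm f" unfolding sigma_def by simp
    also have "\<dots> \<le> R" using that c_le[of n] unfolding R_def by simp
    finally show ?thesis .
  qed
  have "\<exists>h::'a \<Rightarrow>\<^sub>L real. norm h \<le> R \<and> (\<forall>n. P n (blinfun_apply h))"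
  proof (rule blinfun_decreasing_Inter_nonempty)
    show "R \<ge> 0" unfolding R_def using \<open>m \<ge> 0\<close> by simp
    show "closedin (pointwise_ball_topology R) {F \<in> topspace (pointwise_ball_topology R). P n F}" for n
      unfolding P_def by (rule closedin_sigma_sublevel_pointwise)
    show "\<exists>h::'a \<Rightarrow>\<^sub>L real. norm h \<le> R \<and> P n (blinfun_apply h)" for n
    proof -
      have "m < c n" unfolding c_def by simp
      then obtain h where "h \<in> U" "sigma f g h < c n"
        using cInf_lessD[of "sigma f g ` U" "c n"] \<open>U \<noteq> {}\<close> unfolding m_def by auto
      then show ?thesis using P_iff norm_le less_imp_le by blast
    qed
    show "P n F" if "P (Suc n) F" for n F
    proof -
      have "c (Suc n) \<le> c n" unfolding c_def by (simp add: frac_le)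
      then show ?thesis using that sigma_sublevel_pointwise_mono unfolding P_def by blast
    qed
  qed
  then obtain h :: "'a \<Rightarrow>\<^sub>L real" where h: "h \<in> U" "\<And>n. sigma f g h \<le> c n"
    using P_iff by blast
  have "sigma f g h \<le> m"
  proof (rule field_le_epsilon)
    fix e :: real assume "e > 0"
    then obtain n where "1 / real (Suc n) < e" using nat_approx_posE by blast
    then show "sigma f g h \<le> m + e" using h(2)[of n] unfolding c_def by simp
  qed
  then show ?thesis using h(1) m_le order_trans by blast
qed

section \<open>Uniqueness and minimality of the quasi-supremum\<close>

text \<open>With  e = a2 - a1 = b2 - b1  and  \<delta> = \<parallel>a2\<parallel> - \<parallel>a1\<parallel> = \<parallel>b1\<parallel> - \<parallel>b2\<parallel>, parallelism gives
  \<parallel>a2\<parallel> e = \<delta> a2  and  \<parallel>b1\<parallel> e = -\<delta> b1  (and similarly with a1, b2), so both  e  and  -e  lie in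
  the cone.\<close>

lemma pointed_cone_parallel_eq:
  fixes a1 a2 b1 b2 :: "'a::real_normed_vector"
  assumes scaleR: "\<And>c x. c \<ge> 0 \<Longrightarrow> x \<in> P \<Longrightarrow> c *\<^sub>R x \<in> P"
    and pointed: "\<And>x. x \<in> P \<Longrightarrow> - x \<in> P \<Longrightarrow> x = 0"
    and mem: "a1 \<in> P" "a2 \<in> P" "b1 \<in> P" "b2 \<in> P"
    and diff: "a2 - a1 = b2 - b1"
    and parallel: "norm a1 *\<^sub>R a2 = norm a2 *\<^sub>R a1" "norm b1 *\<^sub>R b2 = norm b2 *\<^sub>R b1"
    and sum: "norm a1 + norm b1 = norm a2 + norm b2"
  shows "a1 = a2"
proof -
  define e \<delta> where "e = a2 - a1" and "\<delta> = norm a2 - norm a1"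
  have scaled: "x \<in> P" if "r > 0" "t \<ge> 0" "z \<in> P" "r *\<^sub>R x = t *\<^sub>R z" for x r t z
  proof -
    have "x = (1 / r) *\<^sub>R (r *\<^sub>R x)" using \<open>r > 0\<close> by simp
    also have "\<dots> = (t / r) *\<^sub>R z" using that(4) by simp
    finally show ?thesis using that by (simp add: scaleR)
  qed
  have a2: "norm a2 *\<^sub>R e = \<delta> *\<^sub>R a2" and a1: "norm a1 *\<^sub>R (- e) = (- \<delta>) *\<^sub>R a1"
    using parallel(1) unfolding e_def \<delta>_def by (simp_all add: algebra_simps)
  have e_eq: "e = b2 - b1" and \<delta>_eq: "\<delta> = norm b1 - norm b2"
    using diff sum unfolding e_def \<delta>_def by simp_all
  have b1: "norm b1 *\<^sub>R (- e) = \<delta> *\<^sub>R b1" and b2: "norm b2 *\<^sub>R e = (- \<delta>) *\<^sub>R b2"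
    using parallel(2) unfolding e_eq \<delta>_eq by (simp_all add: algebra_simps)
  have "e = 0"
  proof (cases \<delta> "0::real" rule: linorder_cases)
    case greater
    then have "norm a2 > 0" "norm b1 > 0"
      using sum norm_ge_zero[of a1] norm_ge_zero[of b2] unfolding \<delta>_def by linarith+
    then show ?thesis
      using scaled[OF _ _ _ a2] scaled[OF _ _ _ b1] greater mem pointed by auto
  next
    case less
    then have "norm a1 > 0" "norm b2 > 0"
      using sum norm_ge_zero[of a2] norm_ge_zero[of b1] unfolding \<delta>_def by linarith+
    then show ?thesis
      using scaled[OF _ _ _ a1] scaled[OF _ _ _ b2] less mem pointed by auto
  next
    case equal
    then have "a1 = 0 \<or> e = 0" using a1 by simp
    moreover have "e = 0" if "a1 = 0" using equal that unfolding e_def \<delta>_def by simp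
    ultimately show ?thesis by blast
  qed
  then show ?thesis unfolding e_def by simp
qed

text \<open>The midpoint of two minimizers is again one, since  sigma f g  is convex; this forces
  equality in the triangle inequality for the pairs  h1 - f, h2 - f  and  h1 - g, h2 - g.\<close>

lemma sigma_minimizer_upper_bounds_unique:
  fixes K :: "'a::real_normed_vector set" and f g :: "'a \<Rightarrow>\<^sub>L real"
  assumes "reflexive_space TYPE('a)" "smooth_space TYPE('a)"
    and dense: "closure {x - y | x y. x \<in> K \<and> y \<in> K} = UNIV"
  defines "U \<equiv> upper_bounds (dual_cone K) {f, g}"
  assumes h1: "h1 \<in> U" "\<forall>w\<in>U. sigma f g h1 \<le> sigma f g w"
    and h2: "h2 \<in> U" "\<forall>w\<in>U. sigma f g h2 \<le> sigma f g w"
  shows "h1 = h2"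
proof -
  define a1 a2 b1 b2 where "a1 = h1 - f" and "a2 = h2 - f" and "b1 = h1 - g" and "b2 = h2 - g"
  have mem: "a1 \<in> dual_cone K" "a2 \<in> dual_cone K" "b1 \<in> dual_cone K" "b2 \<in> dual_cone K"
    using h1(1) h2(1) unfolding U_def mem_upper_bounds_pair_iff a1_def a2_def b1_def b2_def by auto
  define mid where "mid = (1/2::real) *\<^sub>R (h1 + h2)"
  have mid_f: "mid - f = (1/2::real) *\<^sub>R (a1 + a2)" and mid_g: "mid - g = (1/2::real) *\<^sub>R (b1 + b2)"
    unfolding mid_def a1_def a2_def b1_def b2_def
    by (simp_all add: algebra_simps flip: scaleR_add_left)
  have "mid \<in> U"
    unfolding U_def mem_upper_bounds_pair_iff mid_f mid_g
    using mem by (simp add: dual_cone_add dual_cone_scaleR)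
  then have "sigma f g h1 \<le> sigma f g mid" using h1(2) by blast
  then have "norm a1 + norm b1 \<le> (1/2) * norm (a1 + a2) + (1/2) * norm (b1 + b2)"
    unfolding sigma_def mid_f mid_g a1_def[symmetric] b1_def[symmetric] by simp
  moreover have "norm a1 + norm b1 = norm a2 + norm b2"
    using h1 h2 unfolding sigma_def a1_def a2_def b1_def b2_def by (meson antisym)
  moreover have "norm (a1 + a2) \<le> norm a1 + norm a2" "norm (b1 + b2) \<le> norm b1 + norm b2"
    by (rule norm_triangle_ineq)+
  ultimately have "norm (a1 + a2) = norm a1 + norm a2" "norm (b1 + b2) = norm b1 + norm b2"
    and "norm a1 + norm b1 = norm a2 + norm b2"
    by linarith+
  then have "a1 = a2"
    using pointed_cone_parallel_eq[of "dual_cone K", OF dual_cone_scaleR dual_cone_pointed[OF dense] mem]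
      dual_norm_add_eq_imp_parallel[OF assms(1,2)]
    unfolding a1_def a2_def b1_def b2_def by auto
  then show ?thesis unfolding a1_def a2_def by simp
qed

lemma sigma_minimizer_mem_min_upper_bounds:
  fixes K :: "'a::real_normed_vector set" and f g :: "'a \<Rightarrow>\<^sub>L real"
  assumes conormal: "approx_1_conormal K"
    and "reflexive_space TYPE('a)" "smooth_space TYPE('a)"
    and "closure {x - y | x y. x \<in> K \<and> y \<in> K} = UNIV"
  defines "U \<equiv> upper_bounds (dual_cone K) {f, g}"
  assumes h: "h \<in> U" "\<forall>w\<in>U. sigma f g h \<le> sigma f g w"
  shows "h \<in> min_upper_bounds (dual_cone K) {f, g}"
proof -
  have "w = h" if w: "w \<in> U" "cle (dual_cone K) w h" for w
  proof -
    have "w - f \<in> dual_cone K" "w - g \<in> dual_cone K"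
      using w(1) unfolding U_def mem_upper_bounds_pair_iff by auto
    moreover have "(h - f) - (w - f) \<in> dual_cone K" "(h - g) - (w - g) \<in> dual_cone K"
      using w(2) unfolding cle_def by simp_all
    ultimately have "sigma f g w \<le> sigma f g h"
      unfolding sigma_def using dual_cone_norm_mono[OF conormal] by (meson add_mono)
    then have "\<forall>v\<in>U. sigma f g w \<le> sigma f g v" using h(2) by (meson order_trans)
    then show ?thesis
      using sigma_minimizer_upper_bounds_unique[OF assms(2-4)] w(1) h unfolding U_def by blast
  qed
  then show ?thesis using h(1) unfolding min_upper_bounds_def U_def upper_bounds_def by blast
qed

lemma quasi_lattice_wrt_subset:
  assumes lattice: "quasi_lattice_wrt K S" and subset: "\<And>x y. S' x y \<subseteq> S x y"
    and minimizer: "\<And>x y. \<exists>z\<in>S' x y. \<forall>w\<in>S x y. sigma x y z \<le> sigma x y w"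
  shows "quasi_lattice_wrt K S' \<and> quasi_sup_wrt S' = quasi_sup_wrt S"
proof -
  have same: "(z \<in> S' x y \<and> (\<forall>w\<in>S' x y. sigma x y z \<le> sigma x y w)) \<longleftrightarrow>
      (z \<in> S x y \<and> (\<forall>w\<in>S x y. sigma x y z \<le> sigma x y w))" for x y z
  proof -
    obtain h where h: "h \<in> S' x y" "\<forall>w\<in>S x y. sigma x y h \<le> sigma x y w"
      using minimizer by blast
    have "h \<in> S x y" using h(1) subset by blast
    have "\<exists>!z. z \<in> S x y \<and> (\<forall>w\<in>S x y. sigma x y z \<le> sigma x y w)"
      using lattice unfolding quasi_lattice_wrt_def by blast
    then obtain z0 where z0: "\<And>z. z \<in> S x y \<and> (\<forall>w\<in>S x y. sigma x y z \<le> sigma x y w) \<Longrightarrow> z = z0"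
      by blast
    have unique: "z = h" if "z \<in> S x y" "\<forall>w\<in>S x y. sigma x y z \<le> sigma x y w" for z
      using z0[OF conjI[OF that]] z0[OF conjI[OF \<open>h \<in> S x y\<close> h(2)]] by simp
    show ?thesis
    proof
      assume z: "z \<in> S' x y \<and> (\<forall>w\<in>S' x y. sigma x y z \<le> sigma x y w)"
      then have "sigma x y z \<le> sigma x y h" using h(1) by blast
      then show "z \<in> S x y \<and> (\<forall>w\<in>S x y. sigma x y z \<le> sigma x y w)"
        using z h(2) subset order_trans by blast
    next
      assume "z \<in> S x y \<and> (\<forall>w\<in>S x y. sigma x y z \<le> sigma x y w)"
      then have "z = h" using unique by blast
      then show "z \<in> S' x y \<and> (\<forall>w\<in>S' x y. sigma x y z \<le> sigma x y w)"
        using h subset by blast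
    qed
  qed
  have "S' x y \<noteq> {}" for x y using minimizer by blast
  then have "quasi_lattice_wrt K S'"
    using lattice unfolding quasi_lattice_wrt_def same by simp
  moreover have "quasi_sup_wrt S' = quasi_sup_wrt S"
    unfolding quasi_sup_wrt_def same ..
  ultimately show ?thesis ..
qed

theorem theorem6p6:
  fixes \<alpha> :: real and K :: "'a::banach set"
  assumes "\<alpha> > 0"
    and "is_cone K" and "closed K"
    and "alpha_normal \<alpha> K"
    and "smooth_space TYPE('a)"
    and "reflexive_space TYPE('a)"
    and "closure {x - y | x y. x \<in> K \<and> y \<in> K} = UNIV"
  shows "upsilon_quasi_lattice (dual_cone K) \<and>
         (approx_1_conormal K \<longrightarrow>
           mu_quasi_lattice (dual_cone K) \<and>
           upsilon_quasi_sup (dual_cone K) = mu_quasi_sup (dual_cone K))"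
proof -
  let ?U = "\<lambda>f g. upper_bounds (dual_cone K) {f, g}"
  have "K \<noteq> {}" using assms(7) by auto
  then have nonempty: "?U f g \<noteq> {}" for f g
    using upper_bounds_dual_cone_nonempty assms(1,2,4) by blast
  have minimizer: "\<exists>h\<in>?U f g. \<forall>w\<in>?U f g. sigma f g h \<le> sigma f g w" for f g
    using exists_sigma_minimizer_upper_bounds nonempty by blast
  have upsilon: "upsilon_quasi_lattice (dual_cone K)"
    unfolding upsilon_quasi_lattice_def quasi_lattice_wrt_def
    using closed_dual_cone nonempty minimizer
      sigma_minimizer_upper_bounds_unique[OF assms(6,5,7)] by blast
  moreover have "mu_quasi_lattice (dual_cone K) \<and>
      upsilon_quasi_sup (dual_cone K) = mu_quasi_sup (dual_cone K)" if "approx_1_conormal K"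
  proof -
    let ?M = "\<lambda>f g. min_upper_bounds (dual_cone K) {f, g}"
    have "?M f g \<subseteq> ?U f g" for f g unfolding min_upper_bounds_def by blast
    moreover have "\<exists>h\<in>?M f g. \<forall>w\<in>?U f g. sigma f g h \<le> sigma f g w" for f g
      using minimizer sigma_minimizer_mem_min_upper_bounds[OF that assms(6,5,7)] by blast
    ultimately show ?thesis
      using quasi_lattice_wrt_subset[OF upsilon[unfolded upsilon_quasi_lattice_def], of ?M]
      unfolding mu_quasi_lattice_def upsilon_quasi_sup_def mu_quasi_sup_def by simp
  qed
  ultimately show ?thesis by blast
qed

end
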